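(* Let $x,y\in\mathbb{Z}_3$ be $3$-adic integers and let $v=(v_1,v_2,\dots)$ be a sequence in $\{0,1\}$ containing infinitely many $1$'s. If $v$ is a back tracing parity vector for both $x$ and $y$, then $x=y$. (In particular, this holds for positive integers $x,y$.)
   Context: On $\mathbb{Z}_3$ let $T_0^{-1}(z)=2z$, and for $z\equiv 2\pmod 3$ let $T_1^{-1}(z)=(2z-1)/3\in\mathbb{Z}_3$. A sequence $(v_1,v_2,\dots)\in\{0,1\}^{\mathbb{N}}$ is a back tracing parity vector for $x\in\mathbb{Z}_3$ if the sequence $x_0=x$, $x_i=T_{v_i}^{-1}(x_{i-1})$ ($i\ge 1$) is everywhere defined, i.e. $x_{i-1}\equiv 2\pmod 3$ whenever $v_i=1$. For a positive integer $x$ this agrees with: there are positive integers $x_0=x,x_1,x_2,\dots$ with $T(x_i)=x_{i-1}$ and $x_i\equiv v_i\pmod 2$, where $T(z)=z/2$ for $z$ even and $T(z)=(3z+1)/2$ for $z$ odd. *)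

theory Defs
  imports Main
begin

text \<open>3-adic integers, represented canonically as coherent sequences of residues:
  x n is the residue of x modulo 3^n (in 0..<3^n), and x (n+1) reduces to x n mod 3^n.\<close>
definition Z3 :: "(nat \<Rightarrow> int) set" where
  "Z3 = {f. \<forall>n. 0 \<le> f n \<and> f n < 3 ^ n \<and> f (Suc n) mod 3 ^ n = f n}"

definition cong2_mod3 :: "(nat \<Rightarrow> int) \<Rightarrow> bool" where
  "cong2_mod3 z \<longleftrightarrow> z 1 = 2"

definition Tinv0 :: "(nat \<Rightarrow> int) \<Rightarrow> (nat \<Rightarrow> int)" where
  "Tinv0 z = (\<lambda>n. (2 * z n) mod 3 ^ n)"

text \<open>T1^{-1}(z) = (2z-1)/3, meaningful for z = 2 mod 3: the residue mod 3^n is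
  ((2 z - 1) div 3) computed from the residue of z mod 3^(n+1).\<close>
definition Tinv1 :: "(nat \<Rightarrow> int) \<Rightarrow> (nat \<Rightarrow> int)" where
  "Tinv1 z = (\<lambda>n. ((2 * z (Suc n) - 1) div 3) mod 3 ^ n)"

text \<open>The back-traced sequence x_0 = x, x_i = T_{v_i}^{-1}(x_{i-1}); v indexed from 1.\<close>
fun backtrace :: "(nat \<Rightarrow> int) \<Rightarrow> (nat \<Rightarrow> nat) \<Rightarrow> nat \<Rightarrow> (nat \<Rightarrow> int)" where
  "backtrace x v 0 = x"
| "backtrace x v (Suc i) = (if v (Suc i) = 1 then Tinv1 else Tinv0) (backtrace x v i)"

definition is_btpv :: "(nat \<Rightarrow> nat) \<Rightarrow> (nat \<Rightarrow> int) \<Rightarrow> bool" where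
  "is_btpv v x \<longleftrightarrow> (\<forall>i\<ge>1. v i \<in> {0, 1}) \<and>
     (\<forall>i\<ge>1. v i = 1 \<longrightarrow> cong2_mod3 (backtrace x v (i - 1)))"

end

theory Submission
  imports Defs
begin

(* The proof rests on
   the observation that the inverse branches of the Collatz map are precision-
   preserving and in one case precision-gaining:
     - T0^{-1}(z) = 2z:  if 2z and 2w agree mod 3^m, then z and w agree mod 3^m,
       since 2 is a unit mod 3^m;
     - T1^{-1}(z) = (2z-1)/3:  if (2z-1)/3 and (2w-1)/3 agree mod 3^m, then z and
       w agree mod 3^(m+1).
   So one step backwards along parity v_k gains v_k digits.  Tracing x and y
   backwards i steps, the i-th iterates trivially agree mod 3^0; walking forwards
   again, x and y agree mod 3^(v_1 + ... + v_i).  Since v contains infinitely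
   many ones this sum is unbounded, hence x and y agree mod every power of 3.
   The file first collects facts about the residue representation Z3, then shows
   that both branches map Z3 to itself with the above precision gain, lifts this
   to back-traced sequences, and finally derives the theorem. *)

lemma Z3_zero:
  assumes "f \<in> Z3"
  shows "f 0 = 0"
proof -
  have "0 \<le> f 0" and "f 0 < 3 ^ 0" using assms unfolding Z3_def by blast+
  then show ?thesis by simp
qed

lemma Z3_reduced: "f \<in> Z3 \<Longrightarrow> f n mod 3 ^ n = f n"
  unfolding Z3_def by (simp add: mod_pos_pos_trivial)

lemma Z3_coherent:
  assumes "f \<in> Z3" and "m \<le> n"
  shows "f n mod 3 ^ m = f m"
  using assms(2)
proof (induction n rule: dec_induct)
  case base
  show ?case using Z3_reduced[OF assms(1)] .
next
  case (step n)
  have "(3::int) ^ m dvd 3 ^ n" using step.hyps(1) by (simp add: le_imp_power_dvd)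
  then have "f (Suc n) mod 3 ^ m = (f (Suc n) mod 3 ^ n) mod 3 ^ m"
    by (simp add: mod_mod_cancel)
  also have "\<dots> = f n mod 3 ^ m" using assms(1) by (simp add: Z3_def)
  finally show ?case using step.IH by simp
qed

lemma Z3_agree_below:
  "f \<in> Z3 \<Longrightarrow> g \<in> Z3 \<Longrightarrow> f n = g n \<Longrightarrow> m \<le> n \<Longrightarrow> f m = g m"
  by (metis Z3_coherent)

lemma Z3_eq_iff_cong:
  "f \<in> Z3 \<Longrightarrow> g \<in> Z3 \<Longrightarrow> f n = g n \<longleftrightarrow> f n mod 3 ^ n = g n mod 3 ^ n"
  by (simp add: Z3_reduced)

text \<open>2 is invertible modulo every power of 3.\<close>
lemma cancel_two_mod_pow3:
  fixes a b :: int
  assumes "(2 * a) mod 3 ^ n = (2 * b) mod 3 ^ n"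
  shows "a mod 3 ^ n = b mod 3 ^ n"
proof -
  have "(3::int) ^ n dvd 2 * (a - b)"
    using assms by (simp add: mod_eq_dvd_iff algebra_simps)
  moreover have "coprime ((3::int) ^ n) 2" by simp
  ultimately have "(3::int) ^ n dvd a - b" using coprime_dvd_mult_right_iff by blast
  then show ?thesis by (simp add: mod_eq_dvd_iff)
qed

lemma times_three_mod_pow3: "(3 * a) mod 3 ^ Suc n = 3 * (a mod 3 ^ n)" for a :: int
  using mod_mult_mult1[of 3 a "3 ^ n"] by simp

lemma exact_third:
  fixes a :: int
  assumes "a mod 3 = 2"
  shows "3 * ((2 * a - 1) div 3) = 2 * a - 1"
proof -
  have "a = 3 * (a div 3) + 2" using assms div_mult_mod_eq[of a 3] by simp
  then have "2 * a - 1 = 3 * (2 * (a div 3) + 1)" by simp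
  then show ?thesis by simp
qed

lemma Z3_residue_mod3:
  assumes "z \<in> Z3" and "z 1 = 2"
  shows "z (Suc n) mod 3 = 2"
  using Z3_coherent[OF assms(1), of 1 "Suc n"] assms(2) by simp

lemma Z3_exact_third:
  assumes "z \<in> Z3" and "z 1 = 2"
  shows "3 * ((2 * z (Suc n) - 1) div 3) = 2 * z (Suc n) - 1"
  using exact_third[OF Z3_residue_mod3[OF assms]] .

lemma Tinv0_Z3:
  assumes "z \<in> Z3"
  shows "Tinv0 z \<in> Z3"
proof -
  have "(2 * z (Suc n) mod 3 ^ Suc n) mod 3 ^ n = 2 * z n mod 3 ^ n" for n
  proof -
    have "(2 * z (Suc n) mod 3 ^ Suc n) mod 3 ^ n = 2 * z (Suc n) mod 3 ^ n"
      by (simp add: mod_mod_cancel)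
    also have "\<dots> = 2 * (z (Suc n) mod 3 ^ n) mod 3 ^ n" by (simp add: mod_mult_right_eq)
    also have "\<dots> = 2 * z n mod 3 ^ n" using assms by (simp add: Z3_def)
    finally show ?thesis .
  qed
  then show ?thesis unfolding Z3_def Tinv0_def by simp
qed

lemma Tinv1_Z3:
  assumes "z \<in> Z3" and "z 1 = 2"
  shows "Tinv1 z \<in> Z3"
proof -
  define q where "q k = (2 * z (Suc k) - 1) div 3" for k
  have "q (Suc n) mod 3 ^ n = q n mod 3 ^ n" for n
  proof -
    have "z (Suc (Suc n)) mod 3 ^ Suc n = z (Suc n) mod 3 ^ Suc n"
      using Z3_coherent[OF assms(1), of "Suc n" "Suc (Suc n)"] Z3_reduced[OF assms(1), of "Suc n"]
      by simp
    then have "(2 * z (Suc (Suc n)) - 1) mod 3 ^ Suc n = (2 * z (Suc n) - 1) mod 3 ^ Suc n"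
      by (metis mod_diff_left_eq mod_mult_right_eq)
    then have "(3 * q (Suc n)) mod 3 ^ Suc n = (3 * q n) mod 3 ^ Suc n"
      unfolding q_def Z3_exact_third[OF assms] .
    then show ?thesis by (simp add: times_three_mod_pow3)
  qed
  then have "(q (Suc n) mod 3 ^ Suc n) mod 3 ^ n = q n mod 3 ^ n" for n
    by (simp add: mod_mod_cancel)
  then show ?thesis unfolding Z3_def Tinv1_def q_def by simp
qed

lemma Tinv0_precision:
  assumes "z \<in> Z3" and "w \<in> Z3" and "Tinv0 z m = Tinv0 w m"
  shows "z m = w m"
proof -
  have "(2 * z m) mod 3 ^ m = (2 * w m) mod 3 ^ m" using assms(3) by (simp add: Tinv0_def)
  then show ?thesis using cancel_two_mod_pow3 Z3_eq_iff_cong[OF assms(1,2)] by blast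
qed

lemma Tinv1_precision:
  assumes z: "z \<in> Z3" "z 1 = 2" and w: "w \<in> Z3" "w 1 = 2"
    and agree: "Tinv1 z m = Tinv1 w m"
  shows "z (Suc m) = w (Suc m)"
proof -
  let ?q = "(2 * z (Suc m) - 1) div 3" and ?r = "(2 * w (Suc m) - 1) div 3"
  have "?q mod 3 ^ m = ?r mod 3 ^ m" using agree by (simp add: Tinv1_def)
  then have "(3 * ?q) mod 3 ^ Suc m = (3 * ?r) mod 3 ^ Suc m"
    by (simp add: times_three_mod_pow3)
  then have "(2 * z (Suc m) - 1) mod 3 ^ Suc m = (2 * w (Suc m) - 1) mod 3 ^ Suc m"
    by (simp only: Z3_exact_third[OF z] Z3_exact_third[OF w])
  then have "(3::int) ^ Suc m dvd (2 * z (Suc m) - 1) - (2 * w (Suc m) - 1)"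
    by (simp only: mod_eq_dvd_iff)
  then have "(2 * z (Suc m)) mod 3 ^ Suc m = (2 * w (Suc m)) mod 3 ^ Suc m"
    by (simp add: mod_eq_dvd_iff)
  then show ?thesis using cancel_two_mod_pow3 Z3_eq_iff_cong[OF z(1) w(1)] by blast
qed

lemma branch_precision:
  assumes "z \<in> Z3" and "w \<in> Z3" and "b \<in> {0, 1}"
    and "b = 1 \<Longrightarrow> z 1 = 2 \<and> w 1 = 2"
    and "(if b = 1 then Tinv1 else Tinv0) z m = (if b = 1 then Tinv1 else Tinv0) w m"
  shows "z (b + m) = w (b + m)"
  using assms Tinv0_precision Tinv1_precision by (cases "b = 1") auto

lemma backtrace_Z3:
  assumes "x \<in> Z3" and "is_btpv v x"
  shows "backtrace x v j \<in> Z3"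
proof (induction j)
  case 0
  show ?case using assms(1) by simp
next
  case (Suc j)
  have "v (Suc j) = 1 \<Longrightarrow> cong2_mod3 (backtrace x v j)"
    using assms(2) unfolding is_btpv_def by (metis diff_Suc_1 le_add1 plus_1_eq_Suc)
  then show ?case using Suc Tinv0_Z3 Tinv1_Z3 by (auto simp: cong2_mod3_def)
qed

lemma backtrace_cong2:
  "is_btpv v x \<Longrightarrow> v (Suc j) = 1 \<Longrightarrow> backtrace x v j 1 = 2"
  unfolding is_btpv_def cong2_mod3_def by (metis diff_Suc_1 le_add1 plus_1_eq_Suc)

text \<open>If v is a back tracing parity vector for x and y, then for every i \<ge> j the
  j-th iterates agree modulo 3^(v_{j+1} + ... + v_i): the i-th iterates agree at
  level 0, and each step back towards j gains v_k digits.\<close>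
lemma backtrace_agreement:
  assumes x: "x \<in> Z3" "is_btpv v x" and y: "y \<in> Z3" "is_btpv v y" and "j \<le> i"
  shows "backtrace x v j (\<Sum>k = Suc j..i. v k) = backtrace y v j (\<Sum>k = Suc j..i. v k)"
  using assms(5)
proof (induction j rule: inc_induct)
  case base
  show ?case using Z3_zero[OF backtrace_Z3[OF x]] Z3_zero[OF backtrace_Z3[OF y]] by simp
next
  case (step j)
  have digit: "v (Suc j) \<in> {0, 1}" using x(2) unfolding is_btpv_def by simp
  have "(\<Sum>k = Suc j..i. v k) = v (Suc j) + (\<Sum>k = Suc (Suc j)..i. v k)"
    using step.hyps(2) by (simp add: sum.atLeast_Suc_atMost)
  moreover have "backtrace x v j (v (Suc j) + (\<Sum>k = Suc (Suc j)..i. v k))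
               = backtrace y v j (v (Suc j) + (\<Sum>k = Suc (Suc j)..i. v k))"
    using branch_precision[OF backtrace_Z3[OF x] backtrace_Z3[OF y] digit]
      backtrace_cong2[OF x(2)] backtrace_cong2[OF y(2)] step.IH
    by simp
  ultimately show ?case by simp
qed

lemma partial_sums_unbounded:
  fixes v :: "nat \<Rightarrow> nat"
  assumes "infinite {i. i \<ge> 1 \<and> v i = 1}"
  shows "\<exists>i. n \<le> (\<Sum>k = 1..i. v k)"
proof -
  obtain F where F: "finite F" "card F = n" "F \<subseteq> {i. i \<ge> 1 \<and> v i = 1}"
    using infinite_arbitrarily_large[OF assms] by blast
  obtain i where i: "\<forall>k\<in>F. k \<le> i" using F(1) finite_nat_set_iff_bounded_le by blast
  have "card F = (\<Sum>k\<in>F. v k)" using F(3) by (simp add: subset_eq)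
  also have "\<dots> \<le> (\<Sum>k = 1..i. v k)" using F(3) i by (intro sum_mono2) auto
  finally show ?thesis using F(2) by blast
qed

theorem mainTheorem7:
  fixes x y :: "nat \<Rightarrow> int" and v :: "nat \<Rightarrow> nat"
  assumes "x \<in> Z3" and "y \<in> Z3"
    and "\<forall>i\<ge>1. v i \<in> {0, 1}"
    and "infinite {i. i \<ge> 1 \<and> v i = 1}"
    and "is_btpv v x" and "is_btpv v y"
  shows "x = y"
proof
  fix n
  obtain i where i: "n \<le> (\<Sum>k = 1..i. v k)"
    using partial_sums_unbounded[OF assms(4)] by blast
  have "x (\<Sum>k = 1..i. v k) = y (\<Sum>k = 1..i. v k)"
    using backtrace_agreement[OF assms(1,5) assms(2,6), of 0 i] by simp
  then show "x n = y n" using Z3_agree_below[OF assms(1,2) _ i] by simp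
qed

end
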